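(* Let $m,n\geq 6$. Then $\phi(P_{m-5}\cup W_{n-1},x)=\phi(P_{n-5}\cup W_{m-1},x)$; that is, $P_{m-5}\cup W_{n-1}$ and $P_{n-5}\cup W_{m-1}$ are cospectral with respect to the adjacency matrix. Moreover $ME(P_{m-5}\cup W_{n-1})=ME(P_{n-5}\cup W_{m-1})$.
   Context: $P_t$ denotes the path with $t$ edges (vertices $v_1,\dots,v_{t+1}$). For $N\geq 5$, $W_N$ is the tree obtained from $P_{N-2}$ (vertices $v_1,\dots,v_{N-1}$) by attaching one new pendent vertex to $v_2$ and one new pendent vertex to $v_{N-2}$. $\cup$ denotes disjoint union. $\phi(G,x)$ is the characteristic polynomial of the adjacency matrix of the graph $G$. For a graph $G$ on $n'$ vertices with $m(G,k)$ the number of $k$-edge matchings ($m(G,0)=1$), the matching polynomial is $\varphi(G,x)=\sum_{k\geq0}(-1)^km(G,k)x^{n'-2k}$ and the matching energy $ME(G)$ is the sum of absolute values of all roots (with multiplicity) of $\varphi(G,x)$. *)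

theory Defs
  imports "Jordan_Normal_Form.Char_Poly" "HOL-Computational_Algebra.Fundamental_Theorem_Algebra"
begin

text \<open>A finite simple graph: a vertex set together with a set of 2-element edges.\<close>
type_synonym 'a graph = "'a set \<times> 'a set set"

definition verts :: "'a graph \<Rightarrow> 'a set" where "verts G = fst G"
definition edges :: "'a graph \<Rightarrow> 'a set set" where "edges G = snd G"

definition path_graph :: "nat \<Rightarrow> nat graph" where
  "path_graph t = ({1..t+1}, {{i, i+1} | i. 1 \<le> i \<and> i \<le> t})"

text \<open>W_N (N >= 5): path P_{N-2} on v_1..v_{N-1}, plus new vertex N adjacent to v_2
  and new vertex N+1 adjacent to v_{N-2}.\<close>
definition W_graph :: "nat \<Rightarrow> nat graph" where
  "W_graph N = ({1..N+1},
     {{i, i+1} | i. 1 \<le> i \<and> i \<le> N - 2} \<union> {{2, N}, {N - 2, N + 1}})"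

definition disj_union :: "'a graph \<Rightarrow> 'b graph \<Rightarrow> ('a + 'b) graph" where
  "disj_union G H = (Inl ` verts G \<union> Inr ` verts H,
      (\<lambda>e. Inl ` e) ` edges G \<union> (\<lambda>e. Inr ` e) ` edges H)"

definition vertex_list :: "'a graph \<Rightarrow> 'a list" where
  "vertex_list G = (SOME vs. distinct vs \<and> set vs = verts G)"

definition adj_matrix :: "'a graph \<Rightarrow> int mat" where
  "adj_matrix G = (let vs = vertex_list G in
     mat (length vs) (length vs) (\<lambda>(i,j). if {vs ! i, vs ! j} \<in> edges G then 1 else 0))"

definition char_poly_graph :: "'a graph \<Rightarrow> int poly" where
  "char_poly_graph G = char_poly (adj_matrix G)"

definition num_matchings :: "'a graph \<Rightarrow> nat \<Rightarrow> nat" where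
  "num_matchings G k = card {M. M \<subseteq> edges G \<and> card M = k \<and>
       (\<forall>e\<in>M. \<forall>f\<in>M. e \<noteq> f \<longrightarrow> e \<inter> f = {})}"

definition matching_poly :: "'a graph \<Rightarrow> int poly" where
  "matching_poly G = (\<Sum>k \<le> card (verts G) div 2.
      monom ((-1)^k * int (num_matchings G k)) (card (verts G) - 2*k))"

definition matching_energy :: "'a graph \<Rightarrow> real" where
  "matching_energy G = sum_mset (image_mset cmod (proots (map_poly of_int (matching_poly G) :: complex poly)))"

end

theory Submission
  imports Defs
begin

(* For a forest, the only permutations contributing to det (x I - A) are the products of disjoint
   transpositions along edges, i.e. the involutions of the matchings; a k-edge matching contributes
   (-1)^k x^(n - 2k). Hence the characteristic polynomial of a forest is its matching polynomial,
   which also determines the matching energy. Deleting pendant vertices, the matching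
   polynomial of P_t is p_(t+1), where p_0 = 1, p_1 = x, p_(k+2) = x p_(k+1) - p_k, and that of
   W_(k+5) is x^2 (p_(k+4) - 2 p_(k+2) + p_k) = x^2 (x^2 - 4) p_(k+2). So both graphs have the
   matching polynomial x^2 (x^2 - 4) p_(m-4) p_(n-4), which is symmetric in m and n. *)

section \<open>Matching polynomials\<close>

abbreviation X :: "int poly" where
  "X \<equiv> [:0, 1:]"

definition is_matching :: "'a set set \<Rightarrow> bool" where
  "is_matching M \<longleftrightarrow> (\<forall>e\<in>M. card e = 2) \<and> (\<forall>e\<in>M. \<forall>f\<in>M. e \<noteq> f \<longrightarrow> e \<inter> f = {})"

lemma is_matchingD:
  assumes "is_matching M" "e \<in> M"
  shows "card e = 2" "\<And>f. f \<in> M \<Longrightarrow> e \<noteq> f \<Longrightarrow> e \<inter> f = {}"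
  using assms unfolding is_matching_def by auto

definition matchings :: "'a set \<Rightarrow> 'a set set \<Rightarrow> 'a set set set" where
  "matchings V E = {M. M \<subseteq> E \<and> \<Union>M \<subseteq> V \<and> is_matching M}"

text \<open>Vertex set and edge set are decoupled here: only the edges of \<open>E\<close> inside \<open>V\<close> count,
  so deleting vertices only changes \<open>V\<close>.\<close>
definition matching_polynomial :: "'a set \<Rightarrow> 'a set set \<Rightarrow> int poly" where
  "matching_polynomial V E = (\<Sum>M\<in>matchings V E. (-1) ^ card M * X ^ (card V - 2 * card M))"

lemma finite_matchings: "finite V \<Longrightarrow> finite (matchings V E)"
  by (rule finite_subset[of _ "Pow (Pow V)"]) (auto simp: matchings_def)

lemma matchings_cardD:
  assumes "finite V" "M \<in> matchings V E"
  shows "finite M" "card (\<Union>M) = 2 * card M" "2 * card M \<le> card V"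
proof -
  have M: "\<Union>M \<subseteq> V" "is_matching M" using assms(2) unfolding matchings_def by auto
  then show "finite M" using assms(1) by (meson finite_UnionD finite_subset)
  have "card (\<Union>M) = sum card M"
    using M assms(1) by (intro card_Union_disjoint) (auto simp: is_matching_def disjoint_def
        intro: finite_subset)
  also have "\<dots> = 2 * card M" using M(2) by (simp add: is_matching_def)
  finally show "card (\<Union>M) = 2 * card M" .
  then show "2 * card M \<le> card V" using M(1) assms(1) by (metis card_mono)
qed

lemma X_pow_card_remove_matching:
  assumes "finite V" "v \<in> V" "M \<in> matchings (V - {v}) E"
  shows "X ^ (card V - 2 * card M) = X * X ^ (card (V - {v}) - 2 * card M)"
proof -
  have "2 * card M \<le> card (V - {v})" using matchings_cardD(3)[OF _ assms(3)] assms(1) by simp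
  moreover have "card (V - {v}) = card V - 1" "card V \<ge> 1"
    using assms(1,2) by (auto simp: Suc_le_eq card_gt_0_iff)
  ultimately have "card V - 2 * card M = Suc (card (V - {v}) - 2 * card M)" by linarith
  then show ?thesis by simp
qed

lemma matchings_empty [simp]: "matchings {} E = {{}}"
proof -
  have "M = {}" if "M \<in> matchings {} E" for M
  proof -
    have "\<forall>e\<in>M. e = {}" "\<forall>e\<in>M. card e = 2" using that by (auto simp: matchings_def is_matching_def)
    then show ?thesis by fastforce
  qed
  then show ?thesis by (auto simp: matchings_def is_matching_def)
qed

lemma matching_polynomial_empty [simp]: "matching_polynomial {} E = 1"
  by (simp add: matching_polynomial_def)

lemma matchings_mono: "V \<subseteq> W \<Longrightarrow> matchings V E \<subseteq> matchings W E"
  unfolding matchings_def by auto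

lemma insert_in_matchings:
  assumes "M \<in> matchings (V - e) E" "e \<in> E" "e \<subseteq> V" "card e = 2"
  shows "insert e M \<in> matchings V E"
proof -
  have M: "M \<subseteq> E" "\<Union>M \<subseteq> V - e" "is_matching M" using assms(1) by (auto simp: matchings_def)
  then have "f \<inter> e = {}" "e \<inter> f = {}" if "f \<in> M" for f using that by auto
  with M assms(2-4) show ?thesis unfolding matchings_def is_matching_def by auto
qed

lemma remove_from_matchings:
  assumes "M \<in> matchings V E" "e \<in> M"
  shows "M - {e} \<in> matchings (V - e) E"
proof -
  have M: "M \<subseteq> E" "\<Union>M \<subseteq> V" "is_matching M" using assms(1) by (auto simp: matchings_def)
  then have "f \<inter> e = {}" if "f \<in> M - {e}" for f using that assms(2) by (auto simp: is_matching_def)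
  with M show ?thesis unfolding matchings_def is_matching_def by auto
qed

lemma Un_in_matchings:
  assumes "M1 \<in> matchings V1 E" "M2 \<in> matchings V2 E" "V1 \<inter> V2 = {}"
  shows "M1 \<union> M2 \<in> matchings (V1 \<union> V2) E"
proof -
  have M: "M1 \<subseteq> E" "\<Union>M1 \<subseteq> V1" "is_matching M1" "M2 \<subseteq> E" "\<Union>M2 \<subseteq> V2" "is_matching M2"
    using assms(1,2) by (auto simp: matchings_def)
  have "is_matching (M1 \<union> M2)"
    unfolding is_matching_def
  proof (intro conjI ballI impI)
    fix e assume "e \<in> M1 \<union> M2"
    then show "card e = 2" using M(3,6) by (auto simp: is_matching_def)
  next
    fix e f assume ef: "e \<in> M1 \<union> M2" "f \<in> M1 \<union> M2" "e \<noteq> f"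
    then consider "e \<in> M1" "f \<in> M1" | "e \<in> M2" "f \<in> M2" | "e \<in> M1" "f \<in> M2" | "e \<in> M2" "f \<in> M1"
      by blast
    then show "e \<inter> f = {}"
    proof cases
      case 1
      then show ?thesis using M(3) ef(3) by (simp add: is_matching_def)
    next
      case 2
      then show ?thesis using M(6) ef(3) by (simp add: is_matching_def)
    qed (use M(2,5) assms(3) in blast)+
  qed
  with M show ?thesis by (auto simp: matchings_def)
qed

lemma matching_polynomial_remove_vertex_sum:
  assumes "finite V" "v \<in> V"
  shows "(\<Sum>M\<in>matchings (V - {v}) E. (-1) ^ card M * X ^ (card V - 2 * card M)) =
    X * matching_polynomial (V - {v}) E"
  unfolding matching_polynomial_def sum_distrib_left
proof (intro sum.cong refl)
  fix M assume "M \<in> matchings (V - {v}) E"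
  then show "(-1) ^ card M * X ^ (card V - 2 * card M) =
      X * ((-1) ^ card M * X ^ (card (V - {v}) - 2 * card M))"
    by (simp only: X_pow_card_remove_matching[OF assms] mult.left_commute)
qed

lemma matching_polynomial_isolated:
  assumes "finite V" "v \<in> V" and isolated: "\<And>e. e \<in> E \<Longrightarrow> v \<in> e \<Longrightarrow> e \<subseteq> V \<Longrightarrow> card e = 2 \<Longrightarrow> False"
  shows "matching_polynomial V E = X * matching_polynomial (V - {v}) E"
proof -
  have "v \<notin> \<Union>M" if M: "M \<in> matchings V E" for M
  proof
    assume "v \<in> \<Union>M"
    then obtain e where e: "e \<in> M" "v \<in> e" by blast
    with M have "e \<in> E" "e \<subseteq> V" "card e = 2" by (auto simp: matchings_def is_matching_def)
    with e(2) show False using isolated by blast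
  qed
  then have "matchings V E = matchings (V - {v}) E"
    using matchings_mono[of "V - {v}" V E] by (auto simp: matchings_def)
  then show ?thesis
    unfolding matching_polynomial_def[of V]
      by (simp only: matching_polynomial_remove_vertex_sum[OF assms(1,2)])
qed

lemma matchings_pendant_split:
  assumes "v \<in> V" "u \<in> V" "u \<noteq> v" "{u, v} \<in> E"
    and pendant: "\<And>e. e \<in> E \<Longrightarrow> v \<in> e \<Longrightarrow> e \<subseteq> V \<Longrightarrow> card e = 2 \<Longrightarrow> e = {u, v}"
  shows "matchings V E = matchings (V - {v}) E \<union> insert {u, v} ` matchings (V - {u, v}) E"
proof (intro equalityI subsetI)
  fix M assume M: "M \<in> matchings V E"
  show "M \<in> matchings (V - {v}) E \<union> insert {u, v} ` matchings (V - {u, v}) E"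
  proof (cases "{u, v} \<in> M")
    case False
    have "v \<notin> \<Union>M"
    proof
      assume "v \<in> \<Union>M"
      then obtain e where "e \<in> M" "v \<in> e" by blast
      with M pendant have "e = {u, v}" by (auto simp: matchings_def is_matching_def)
      with False \<open>e \<in> M\<close> show False by simp
    qed
    with M show ?thesis by (auto simp: matchings_def)
  next
    case True
    then have "M = insert {u, v} (M - {{u, v}})" by auto
    moreover have "M - {{u, v}} \<in> matchings (V - {u, v}) E"
      using remove_from_matchings[OF M True] by simp
    ultimately show ?thesis by blast
  qed
next
  fix M assume "M \<in> matchings (V - {v}) E \<union> insert {u, v} ` matchings (V - {u, v}) E"
  then show "M \<in> matchings V E"
    using matchings_mono[of "V - {v}" V E] insert_in_matchings[of _ V "{u, v}" E] assms(1-4)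
    by (auto simp: set_diff_eq)
qed

lemma matching_polynomial_pendant:
  assumes "finite V" "v \<in> V" "u \<in> V" "u \<noteq> v" "{u, v} \<in> E"
    and pendant: "\<And>e. e \<in> E \<Longrightarrow> v \<in> e \<Longrightarrow> e \<subseteq> V \<Longrightarrow> card e = 2 \<Longrightarrow> e = {u, v}"
  shows "matching_polynomial V E =
    X * matching_polynomial (V - {v}) E - matching_polynomial (V - {u, v}) E"
proof -
  let ?A = "matchings (V - {v}) E" and ?B = "matchings (V - {u, v}) E"
  define t where "t M = (-1) ^ card M * X ^ (card V - 2 * card M)" for M :: "'a set set"
  have uv_notin: "{u, v} \<notin> M" if "M \<in> ?A" for M using that by (auto simp: matchings_def)
  have "?B \<subseteq> ?A" by (rule matchings_mono) auto
  then have disj: "?A \<inter> insert {u, v} ` ?B = {}" using uv_notin by blast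
  have inj: "inj_on (insert {u, v}) ?B"
    by (rule inj_onI) (metis \<open>?B \<subseteq> ?A\<close> subsetD uv_notin insert_ident)
  have split: "matchings V E = ?A \<union> insert {u, v} ` ?B" by (rule matchings_pendant_split[OF assms(2-6)])
  have "matching_polynomial V E = sum t ?A + sum t (insert {u, v} ` ?B)"
    unfolding matching_polynomial_def t_def[symmetric] split
    by (rule sum.union_disjoint) (simp_all add: assms(1) finite_matchings disj)
  also have "sum t ?A = X * matching_polynomial (V - {v}) E"
    unfolding t_def by (rule matching_polynomial_remove_vertex_sum[OF assms(1,2)])
  also have "sum t (insert {u, v} ` ?B) = - matching_polynomial (V - {u, v}) E"
    unfolding sum.reindex[OF inj] matching_polynomial_def sum_negf[symmetric]
  proof (intro sum.cong refl)
    fix M assume M: "M \<in> ?B"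
    have "finite M" "2 * card M \<le> card (V - {u, v})" using matchings_cardD[OF _ M] assms(1) by auto
    moreover have "card (V - {u, v}) = card V - 2" using assms(1-4) by (simp add: card_Diff_subset)
    moreover have "{u, v} \<notin> M" using M \<open>?B \<subseteq> ?A\<close> uv_notin by blast
    ultimately show "(t \<circ> insert {u, v}) M = - ((-1) ^ card M * X ^ (card (V - {u, v}) - 2 * card M))"
      unfolding t_def by simp
  qed
  finally show ?thesis by simp
qed

lemma restrict_in_matchings: "M \<in> matchings V E \<Longrightarrow> {e\<in>M. e \<subseteq> W} \<in> matchings W E"
  unfolding matchings_def is_matching_def by auto

lemma bij_betw_Un_matchings:
  assumes disj: "V1 \<inter> V2 = {}"
    and no_cross: "\<And>e. e \<in> E \<Longrightarrow> e \<subseteq> V1 \<union> V2 \<Longrightarrow> card e = 2 \<Longrightarrow> e \<subseteq> V1 \<or> e \<subseteq> V2"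
  shows "bij_betw (\<lambda>(M1, M2). M1 \<union> M2) (matchings V1 E \<times> matchings V2 E) (matchings (V1 \<union> V2) E)"
proof (rule bij_betw_byWitness[where f' = "\<lambda>M. ({e\<in>M. e \<subseteq> V1}, {e\<in>M. e \<subseteq> V2})"])
  show "\<forall>P\<in>matchings V1 E \<times> matchings V2 E. ({e\<in>case P of (M1, M2) \<Rightarrow> M1 \<union> M2. e \<subseteq> V1},
      {e\<in>case P of (M1, M2) \<Rightarrow> M1 \<union> M2. e \<subseteq> V2}) = P"
  proof
    fix P assume "P \<in> matchings V1 E \<times> matchings V2 E"
    then obtain M1 M2 where P: "P = (M1, M2)" and M1: "M1 \<in> matchings V1 E" and M2: "M2 \<in> matchings V2 E"
      by blast
    have in1: "e \<subseteq> V1" "\<not> e \<subseteq> V2" if "e \<in> M1" for e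
    proof -
      have "e \<subseteq> V1" "e \<noteq> {}" using that M1 by (auto simp: matchings_def is_matching_def)
      then show "e \<subseteq> V1" "\<not> e \<subseteq> V2" using disj by blast+
    qed
    have in2: "f \<subseteq> V2" "\<not> f \<subseteq> V1" if "f \<in> M2" for f
    proof -
      have "f \<subseteq> V2" "f \<noteq> {}" using that M2 by (auto simp: matchings_def is_matching_def)
      then show "f \<subseteq> V2" "\<not> f \<subseteq> V1" using disj by blast+
    qed
    have "{e\<in>M1 \<union> M2. e \<subseteq> V1} = M1" "{e\<in>M1 \<union> M2. e \<subseteq> V2} = M2"
      using in1 in2 by blast+
    then show "({e\<in>case P of (M1, M2) \<Rightarrow> M1 \<union> M2. e \<subseteq> V1},
        {e\<in>case P of (M1, M2) \<Rightarrow> M1 \<union> M2. e \<subseteq> V2}) = P"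
      unfolding P by simp
  qed
  show "\<forall>M\<in>matchings (V1 \<union> V2) E. (case ({e\<in>M. e \<subseteq> V1}, {e\<in>M. e \<subseteq> V2}) of (M1, M2) \<Rightarrow> M1 \<union> M2) = M"
  proof
    fix M assume M: "M \<in> matchings (V1 \<union> V2) E"
    have "e \<subseteq> V1 \<or> e \<subseteq> V2" if "e \<in> M" for e
    proof -
      have "e \<in> E" "e \<subseteq> V1 \<union> V2" "card e = 2"
        using M that by (auto simp: matchings_def is_matching_def)
      then show ?thesis by (rule no_cross)
    qed
    then show "(case ({e\<in>M. e \<subseteq> V1}, {e\<in>M. e \<subseteq> V2}) of (M1, M2) \<Rightarrow> M1 \<union> M2) = M" by auto
  qed
  show "(\<lambda>(M1, M2). M1 \<union> M2) ` (matchings V1 E \<times> matchings V2 E) \<subseteq> matchings (V1 \<union> V2) E"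
    using Un_in_matchings[OF _ _ disj] by auto
  show "(\<lambda>M. ({e\<in>M. e \<subseteq> V1}, {e\<in>M. e \<subseteq> V2})) ` matchings (V1 \<union> V2) E \<subseteq> matchings V1 E \<times> matchings V2 E"
    using restrict_in_matchings by blast
qed

lemma matching_polynomial_Un:
  assumes fin: "finite V1" "finite V2" and disj: "V1 \<inter> V2 = {}"
    and no_cross: "\<And>e. e \<in> E \<Longrightarrow> e \<subseteq> V1 \<union> V2 \<Longrightarrow> card e = 2 \<Longrightarrow> e \<subseteq> V1 \<or> e \<subseteq> V2"
  shows "matching_polynomial (V1 \<union> V2) E = matching_polynomial V1 E * matching_polynomial V2 E"
proof -
  define t where "t W M = (-1) ^ card M * X ^ (card W - 2 * card M)"
    for W :: "'a set" and M :: "'a set set"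
  have "matching_polynomial V1 E * matching_polynomial V2 E =
      (\<Sum>(M1, M2) \<in> matchings V1 E \<times> matchings V2 E. t V1 M1 * t V2 M2)"
    unfolding matching_polynomial_def t_def sum_product sum.cartesian_product ..
  also have "\<dots> = (\<Sum>(M1, M2) \<in> matchings V1 E \<times> matchings V2 E. t (V1 \<union> V2) (M1 \<union> M2))"
  proof (intro sum.cong refl, clarify)
    fix M1 M2 assume M1: "M1 \<in> matchings V1 E" and M2: "M2 \<in> matchings V2 E"
    have c1: "finite M1" "2 * card M1 \<le> card V1" using matchings_cardD[OF fin(1) M1] by auto
    have c2: "finite M2" "2 * card M2 \<le> card V2" using matchings_cardD[OF fin(2) M2] by auto
    have "M1 \<inter> M2 = {}"
    proof (rule ccontr)
      assume "M1 \<inter> M2 \<noteq> {}"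
      then obtain e where "e \<in> M1" "e \<in> M2" by blast
      then have "e \<subseteq> V1 \<inter> V2" "card e = 2" using M1 M2 by (auto simp: matchings_def is_matching_def)
      with disj show False by simp
    qed
    then have "card (M1 \<union> M2) = card M1 + card M2" using c1 c2 by (simp add: card_Un_disjoint)
    moreover have "card (V1 \<union> V2) = card V1 + card V2" using fin disj by (simp add: card_Un_disjoint)
    ultimately have "card (V1 \<union> V2) - 2 * card (M1 \<union> M2) = (card V1 - 2 * card M1) +
        (card V2 - 2 * card M2)"
      using c1 c2 by simp
    with \<open>card (M1 \<union> M2) = card M1 + card M2\<close> show "t V1 M1 * t V2 M2 = t (V1 \<union> V2) (M1 \<union> M2)"
      unfolding t_def by (simp add: power_add algebra_simps)
  qed
  also have "\<dots> = (\<Sum>M\<in>matchings (V1 \<union> V2) E. t (V1 \<union> V2) M)"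
    using sum.reindex_bij_betw[OF bij_betw_Un_matchings[OF disj no_cross], where g = "t (V1 \<union> V2)"]
    by (simp add: case_prod_unfold)
  finally show ?thesis unfolding matching_polynomial_def t_def by simp
qed

lemma image_in_matchings:
  assumes inj: "inj_on f V" and edges: "\<And>e. e \<subseteq> V \<Longrightarrow> card e = 2 \<Longrightarrow> f ` e \<in> E \<longleftrightarrow> e \<in> E'"
    and M: "M \<in> matchings V E'"
  shows "(`) f ` M \<in> matchings (f ` V) E"
proof -
  have sub: "\<forall>e\<in>M. e \<subseteq> V" using M by (auto simp: matchings_def)
  have "\<forall>e\<in>M. e \<in> E' \<and> card e = 2" using M by (auto simp: matchings_def is_matching_def)
  then have "\<forall>e\<in>M. f ` e \<in> E \<and> card (f ` e) = 2"
    using edges sub inj by (auto simp: card_image inj_on_subset)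
  moreover have "f ` e \<inter> f ` e' = {}" if "e \<in> M" "e' \<in> M" "f ` e \<noteq> f ` e'" for e e'
  proof -
    have "e \<noteq> e'" using that(3) by auto
    then have "e \<inter> e' = {}" using M that(1,2) unfolding matchings_def is_matching_def by blast
    then show ?thesis using inj sub that(1,2) unfolding inj_on_def by blast
  qed
  ultimately show ?thesis using sub unfolding matchings_def is_matching_def by blast
qed

lemma preimage_in_matchings:
  assumes inj: "inj_on f V" and edges: "\<And>e. e \<subseteq> V \<Longrightarrow> card e = 2 \<Longrightarrow> f ` e \<in> E \<longleftrightarrow> e \<in> E'"
    and M: "M \<in> matchings (f ` V) E"
  shows "(\<lambda>e. V \<inter> f -` e) ` M \<in> matchings V E'"
proof -
  have img: "\<forall>e\<in>M. f ` (V \<inter> f -` e) = e" using M by (auto simp: matchings_def)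
  have "V \<inter> f -` e \<in> E' \<and> card (V \<inter> f -` e) = 2" if "e \<in> M" for e
  proof -
    have "e \<in> E" "card e = 2" using M that by (auto simp: matchings_def is_matching_def)
    moreover have "card (f ` (V \<inter> f -` e)) = card (V \<inter> f -` e)"
      using inj by (auto simp: card_image inj_on_subset)
    ultimately show ?thesis using edges[of "V \<inter> f -` e"] img that by auto
  qed
  moreover have "(V \<inter> f -` e) \<inter> (V \<inter> f -` e') = {}"
    if "e \<in> M" "e' \<in> M" "V \<inter> f -` e \<noteq> V \<inter> f -` e'" for e e'
  proof -
    have "e \<noteq> e'" using that(3) by auto
    then have "e \<inter> e' = {}" using M that(1,2) unfolding matchings_def is_matching_def by blast
    then show ?thesis by auto
  qed
  ultimately show ?thesis unfolding matchings_def is_matching_def by blast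
qed

lemma matching_polynomial_image:
  assumes inj: "inj_on f V"
    and edges: "\<And>e. e \<subseteq> V \<Longrightarrow> card e = 2 \<Longrightarrow> f ` e \<in> E \<longleftrightarrow> e \<in> E'"
  shows "matching_polynomial (f ` V) E = matching_polynomial V E'"
  unfolding matching_polynomial_def card_image[OF inj]
proof (rule sym, rule sum.reindex_bij_witness[where i = "\<lambda>M. (\<lambda>e. V \<inter> f -` e) ` M"
      and j = "\<lambda>M. (`) f ` M"])
  fix M assume M: "M \<in> matchings V E'"
  then have sub: "\<forall>e\<in>M. e \<subseteq> V" by (auto simp: matchings_def)
  then have "\<forall>e\<in>M. V \<inter> f -` (f ` e) = e" using inj unfolding inj_on_def by blast
  then show "(\<lambda>e. V \<inter> f -` e) ` (`) f ` M = M" by (simp add: image_image)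
  have "inj_on ((`) f) M" using inj_on_image_Pow[OF inj] sub by (meson PowI inj_on_subset subsetI)
  then show "(-1) ^ card ((`) f ` M) * X ^ (card V - 2 * card ((`) f ` M)) =
      (-1) ^ card M * X ^ (card V - 2 * card M)" by (simp add: card_image)
  show "(`) f ` M \<in> matchings (f ` V) E" by (rule image_in_matchings[OF inj edges M])
next
  fix M assume M: "M \<in> matchings (f ` V) E"
  then have "\<forall>e\<in>M. f ` (V \<inter> f -` e) = e" by (auto simp: matchings_def)
  then show "(`) f ` (\<lambda>e. V \<inter> f -` e) ` M = M" by (simp add: image_image)
  show "(\<lambda>e. V \<inter> f -` e) ` M \<in> matchings V E'" by (rule preimage_in_matchings[OF inj edges M])
qed

fun path_poly :: "nat \<Rightarrow> int poly" where
  "path_poly 0 = 1"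
| "path_poly (Suc 0) = X"
| "path_poly (Suc (Suc k)) = X * path_poly (Suc k) - path_poly k"

lemma path_poly_shift_identity:
  "path_poly (k + 4) - 2 * path_poly (k + 2) + path_poly k = (X\<^sup>2 - 4) * path_poly (k + 2)"
  by (simp add: eval_nat_numeral algebra_simps power2_eq_square)

lemma matching_polynomial_interval:
  assumes "\<And>e. e \<in> E \<Longrightarrow> e \<subseteq> {a..<a + k} \<Longrightarrow> card e = 2 \<Longrightarrow> \<exists>i. e = {i, Suc i}"
    and "\<And>i. a \<le> i \<Longrightarrow> Suc i < a + k \<Longrightarrow> {i, Suc i} \<in> E"
  shows "matching_polynomial {a..<a + k} E = path_poly k"
  using assms
proof (induction k rule: path_poly.induct)
  case 1
  then show ?case by simp
next
  case 2
  have "matching_polynomial {a..<a + 1} E = X * matching_polynomial ({a..<a + 1} - {a}) E"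
    by (rule matching_polynomial_isolated) (auto simp: card_2_iff)
  then show ?case by simp
next
  case (3 k)
  let ?V = "{a..<a + Suc (Suc k)}"
  have IH: "matching_polynomial {a..<a + j} E = path_poly j" if j: "j = k \<or> j = Suc k" for j
  proof -
    have "\<exists>i. e = {i, Suc i}" if "e \<in> E" "e \<subseteq> {a..<a + j}" "card e = 2" for e
    proof -
      have "e \<subseteq> ?V" using that(2) j by auto
      then show ?thesis using "3.prems"(1) that(1,3) by blast
    qed
    moreover have "{i, Suc i} \<in> E" if "a \<le> i" "Suc i < a + j" for i
      using "3.prems"(2) that j by auto
    ultimately show ?thesis using "3.IH" j by blast
  qed
  have "matching_polynomial ?V E =
      X * matching_polynomial (?V - {a + Suc k}) E - matching_polynomial (?V - {a + k, a + Suc k}) E"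
  proof (rule matching_polynomial_pendant)
    fix e assume e: "e \<in> E" "a + Suc k \<in> e" "e \<subseteq> ?V" "card e = 2"
    then obtain i where "e = {i, Suc i}" using "3.prems"(1) by blast
    then show "e = {a + k, a + Suc k}" using e(2,3) by auto
  qed (use "3.prems"(2)[of "a + k"] in auto)
  moreover have "?V - {a + Suc k} = {a..<a + Suc k}" "?V - {a + k, a + Suc k} = {a..<a + k}" by auto
  ultimately show ?case by (simp only: IH path_poly.simps simp_thms)
qed

section \<open>Characteristic polynomials of forests\<close>

definition matching_perm :: "'a set set \<Rightarrow> 'a \<Rightarrow> 'a" where
  "matching_perm M x = (if \<exists>e\<in>M. x \<in> e then (THE y. {x, y} \<in> M) else x)"

lemma matching_perm_edge:
  assumes "is_matching M" "{a, b} \<in> M"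
  shows "matching_perm M a = b"
proof -
  have "(THE y. {a, y} \<in> M) = b"
  proof (rule the_equality)
    fix y assume y: "{a, y} \<in> M"
    have "{a, y} \<inter> {a, b} \<noteq> {}" by auto
    then have "{a, y} = {a, b}" using is_matchingD(2)[OF assms(1) y assms(2)] by blast
    moreover have "y \<noteq> a" using is_matchingD(1)[OF assms(1) y] by (cases "y = a") auto
    ultimately show "y = b" by (auto simp: doubleton_eq_iff)
  qed (use assms in simp)
  then show ?thesis using assms(2) unfolding matching_perm_def by auto
qed

lemma matching_perm_outside: "x \<notin> \<Union>M \<Longrightarrow> matching_perm M x = x"
  unfolding matching_perm_def by auto

lemma matching_perm_inside:
  assumes "is_matching M" "e \<in> M" "x \<in> e"
  shows "matching_perm M x \<noteq> x" "e = {x, matching_perm M x}"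
proof -
  obtain a b where ab: "e = {a, b}" "a \<noteq> b" using is_matchingD(1)[OF assms(1,2)] by (meson card_2_iff)
  define y where "y = (if x = a then b else a)"
  have "x = a \<or> x = b" using ab(1) assms(3) by simp
  then have "e = {x, y}" "x \<noteq> y"
    using ab not_sym[OF ab(2)] unfolding y_def by (elim disjE; simp add: insert_commute)+
  moreover have "matching_perm M x = y"
    using matching_perm_edge[OF assms(1)] assms(2) calculation(1) by simp
  ultimately show "matching_perm M x \<noteq> x" "e = {x, matching_perm M x}" by auto
qed

lemma matching_perm_involution:
  assumes "is_matching M"
  shows "matching_perm M (matching_perm M x) = x"
proof (cases "x \<in> \<Union>M")
  case True
  then obtain e where "e \<in> M" "x \<in> e" by blast
  then have "{matching_perm M x, x} \<in> M" using matching_perm_inside[OF assms] by (metis insert_commute)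
  then show ?thesis by (rule matching_perm_edge[OF assms])
qed (simp add: matching_perm_outside)

lemma matching_perm_permutes:
  assumes "is_matching M" "\<Union>M \<subseteq> S"
  shows "matching_perm M permutes S"
proof (rule bij_imp_permutes)
  have "matching_perm M x \<in> S" if "x \<in> S" for x
    using matching_perm_inside(2)[OF assms(1)] matching_perm_outside assms(2) that
    by (metis UnionE UnionI insertCI subsetD)
  then show "bij_betw (matching_perm M) S S"
    by (intro bij_betw_byWitness[where f' = "matching_perm M"])
      (auto simp: matching_perm_involution[OF assms(1)])
  show "matching_perm M x = x" if "x \<notin> S" for x
    using assms(2) that by (intro matching_perm_outside) blast
qed

lemma matching_perm_insert:
  assumes "is_matching (insert {a, b} M)" "{a, b} \<notin> M"
  shows "matching_perm (insert {a, b} M) = Transposition.transpose a b \<circ> matching_perm M"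
proof
  fix x
  have M: "is_matching M" using assms(1) unfolding is_matching_def by auto
  have ab: "a \<noteq> b" using assms(1) unfolding is_matching_def by auto
  have "{a, b} \<inter> e = {}" if "e \<in> M" for e
    using assms that unfolding is_matching_def by (metis insertCI)
  then have ab_free: "a \<notin> \<Union>M" "b \<notin> \<Union>M" by auto
  show "matching_perm (insert {a, b} M) x = (Transposition.transpose a b \<circ> matching_perm M) x"
  proof (cases "x \<in> \<Union>M")
    case True
    then obtain e where e: "e \<in> M" "x \<in> e" by blast
    have e_eq: "e = {x, matching_perm M x}" using matching_perm_inside[OF M e] by auto
    then have "matching_perm (insert {a, b} M) x = matching_perm M x"
      using matching_perm_edge[OF assms(1)] e(1) by auto
    moreover have "matching_perm M x \<noteq> a" "matching_perm M x \<noteq> b" using e e_eq ab_free by auto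
    ultimately show ?thesis by simp
  next
    case False
    then have "matching_perm M x = x" by (rule matching_perm_outside)
    moreover have "matching_perm (insert {a, b} M) a = b" "matching_perm (insert {a, b} M) b = a"
      using matching_perm_edge[OF assms(1)] by (auto simp: insert_commute)
    moreover have "matching_perm (insert {a, b} M) x = x" if "x \<noteq> a" "x \<noteq> b"
      using False that by (intro matching_perm_outside) auto
    ultimately show ?thesis by (cases "x = a \<or> x = b") auto
  qed
qed

lemma sign_matching_perm:
  assumes "finite M" "is_matching M"
  shows "permutation (matching_perm M) \<and> sign (matching_perm M) = (-1) ^ card M"
  using assms
proof (induction M rule: finite_induct)
  case empty
  have "matching_perm {} = id" unfolding matching_perm_def by auto
  then show ?case unfolding \<open>matching_perm {} = id\<close> by (simp add: permutation_id)
next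
  case (insert e M)
  obtain a b where e: "e = {a, b}" "a \<noteq> b"
    using insert.prems unfolding is_matching_def by (meson card_2_iff insertI1)
  have "is_matching M" using insert.prems unfolding is_matching_def by auto
  with insert.IH have IH: "permutation (matching_perm M)" "sign (matching_perm M) = (-1) ^ card M"
    by auto
  have eq: "matching_perm (insert e M) = Transposition.transpose a b \<circ> matching_perm M"
    using matching_perm_insert[of a b M] insert.hyps(2) insert.prems unfolding e(1) by simp
  have swap: "permutation (Transposition.transpose a b)" by (simp add: permutation_swap_id)
  show ?case unfolding eq
  proof
    show "permutation (Transposition.transpose a b \<circ> matching_perm M)"
      by (rule permutation_compose[OF swap IH(1)])
    show "sign (Transposition.transpose a b \<circ> matching_perm M) = (-1) ^ card (insert e M)"
      using sign_compose[OF swap IH(1)] IH(2) e(2) insert.hyps by (simp add: sign_swap_id)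
  qed
qed

definition moved_pairs :: "'a set \<Rightarrow> ('a \<Rightarrow> 'a) \<Rightarrow> 'a set set" where
  "moved_pairs S p = {{i, p i} | i. i \<in> S \<and> p i \<noteq> i}"

lemma moved_pairs_matching_perm:
  assumes "M \<in> matchings S E"
  shows "moved_pairs S (matching_perm M) = M"
proof -
  have M: "is_matching M" "\<Union>M \<subseteq> S" using assms unfolding matchings_def by auto
  show ?thesis
  proof (intro equalityI subsetI)
    fix e assume "e \<in> moved_pairs S (matching_perm M)"
    then obtain i where i: "e = {i, matching_perm M i}" "matching_perm M i \<noteq> i"
      unfolding moved_pairs_def by blast
    then obtain f where "f \<in> M" "i \<in> f" using matching_perm_outside by (metis UnionE)
    then show "e \<in> M" using matching_perm_inside(2)[OF M(1)] i(1) by auto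
  next
    fix e assume e: "e \<in> M"
    then obtain x where x: "x \<in> e" using M(1) unfolding is_matching_def by fastforce
    then have "x \<in> S" using e M(2) by blast
    then show "e \<in> moved_pairs S (matching_perm M)"
      using matching_perm_inside[OF M(1) e x] unfolding moved_pairs_def by blast
  qed
qed

lemma inj_on_matching_perm: "inj_on matching_perm (matchings S E)"
  by (rule inj_onI) (metis moved_pairs_matching_perm)

lemma involution_eq_matching_perm:
  assumes perm: "p permutes S" and invol: "\<And>x. p (p x) = x"
    and along_edges: "\<And>i. i \<in> S \<Longrightarrow> p i \<noteq> i \<Longrightarrow> {i, p i} \<in> E"
  shows "moved_pairs S p \<in> matchings S E" "matching_perm (moved_pairs S p) = p"
proof -
  let ?M = "moved_pairs S p"
  have disjoint: "e \<inter> f = {}" if ef: "e \<in> ?M" "f \<in> ?M" "e \<noteq> f" for e f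
  proof -
    obtain i j where ij: "e = {i, p i}" "f = {j, p j}" using ef(1,2) unfolding moved_pairs_def by blast
    then have "i \<noteq> j" "i \<noteq> p j" "p i \<noteq> j" using ef(3) invol by (metis insert_commute)+
    moreover have "p i \<noteq> p j" using \<open>i \<noteq> j\<close> invol by metis
    ultimately show ?thesis unfolding ij by auto
  qed
  have "\<forall>e\<in>?M. card e = 2" unfolding moved_pairs_def by auto
  with disjoint have matching: "is_matching ?M" unfolding is_matching_def by blast
  have "?M \<subseteq> E" using along_edges unfolding moved_pairs_def by blast
  moreover have "\<Union>?M \<subseteq> S"
  proof
    fix x assume "x \<in> \<Union>?M"
    then obtain i where "x \<in> {i, p i}" "i \<in> S" unfolding moved_pairs_def by blast
    then show "x \<in> S" using permutes_in_image[OF perm] by auto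
  qed
  ultimately show "?M \<in> matchings S E" using matching by (simp add: matchings_def)
  show "matching_perm ?M = p"
  proof
    fix x
    show "matching_perm ?M x = p x"
    proof (cases "p x = x")
      case False
      then have "x \<in> S" using perm by (metis permutes_not_in)
      with False have "{x, p x} \<in> ?M" unfolding moved_pairs_def by blast
      with matching show ?thesis by (rule matching_perm_edge)
    next
      case True
      have "x \<notin> \<Union>?M"
      proof
        assume "x \<in> \<Union>?M"
        then obtain i where "x \<in> {i, p i}" "p i \<noteq> i" unfolding moved_pairs_def by blast
        then show False using True invol by auto
      qed
      then show ?thesis using True by (simp add: matching_perm_outside)
    qed
  qed
qed

lemma funpow_not_involution:
  assumes "inj p" "p (p v) \<noteq> v"
  shows "p ((p ^^ k) v) \<noteq> (p ^^ k) v" "p (p ((p ^^ k) v)) \<noteq> (p ^^ k) v"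
proof -
  have inj_k: "inj (p ^^ k)" using inj_fn[OF assms(1)] .
  show "p ((p ^^ k) v) \<noteq> (p ^^ k) v"
  proof
    assume "p ((p ^^ k) v) = (p ^^ k) v"
    then have "(p ^^ k) (p v) = (p ^^ k) v" by (simp add: funpow_swap1)
    then have "p v = v" by (rule injD[OF inj_k])
    with assms(2) show False by simp
  qed
  show "p (p ((p ^^ k) v)) \<noteq> (p ^^ k) v"
  proof
    assume "p (p ((p ^^ k) v)) = (p ^^ k) v"
    then have "(p ^^ k) (p (p v)) = (p ^^ k) v" by (simp add: funpow_swap1)
    then have "p (p v) = v" by (rule injD[OF inj_k])
    with assms(2) show False by simp
  qed
qed

text \<open>Rank a forest by the distance to a root of each component: adjacent vertices have
  different ranks and every vertex has at most one neighbour of smaller rank, its parent.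
  A finite graph has such a ranking exactly when it is a forest.\<close>
definition forest_ranking :: "'a set \<Rightarrow> 'a set set \<Rightarrow> ('a \<Rightarrow> nat) \<Rightarrow> bool" where
  "forest_ranking V E r \<longleftrightarrow>
     (\<forall>u\<in>V. \<forall>v\<in>V. u \<noteq> v \<longrightarrow> {u, v} \<in> E \<longrightarrow> r u \<noteq> r v) \<and>
     (\<forall>v\<in>V. \<forall>a\<in>V. \<forall>b\<in>V. {v, a} \<in> E \<longrightarrow> {v, b} \<in> E \<longrightarrow> r a < r v \<longrightarrow> r b < r v \<longrightarrow> a = b)"

text \<open>On an orbit of length at least 3, the vertex of maximal rank would have two distinct
  neighbours of smaller rank: its preimage and its image.\<close>
lemma forest_ranking_edge_perm_involution:
  assumes fin: "finite S" and perm: "p permutes S" and ranking: "forest_ranking S E r"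
    and along_edges: "\<And>i. i \<in> S \<Longrightarrow> p i \<noteq> i \<Longrightarrow> {i, p i} \<in> E"
  shows "p (p v) = v"
proof (rule ccontr)
  assume not_invol: "p (p v) \<noteq> v"
  have inj: "inj p" using perm permutes_inj by blast
  have "v \<in> S" using not_invol perm by (metis permutes_not_in)
  define orbit where "orbit = range (\<lambda>k. (p ^^ k) v)"
  have "(p ^^ k) v \<in> S" for k
    by (induction k) (simp_all add: \<open>v \<in> S\<close> permutes_in_image[OF perm])
  then have orbit_S: "orbit \<subseteq> S" unfolding orbit_def by blast
  then have "finite orbit" using fin finite_subset by blast
  have "p ` orbit \<subseteq> orbit" unfolding orbit_def by (auto intro: range_eqI[of _ _ "Suc _"])
  then have p_orbit: "p ` orbit = orbit"
    by (rule endo_inj_surj[OF \<open>finite orbit\<close>]) (use inj inj_on_subset in blast)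
  have "orbit \<noteq> {}" unfolding orbit_def by blast
  with \<open>finite orbit\<close> have "Max (r ` orbit) \<in> r ` orbit" by simp
  then obtain w where "w \<in> orbit" "r w = Max (r ` orbit)" by (metis imageE)
  then have w_max: "r y \<le> r w" if "y \<in> orbit" for y using \<open>finite orbit\<close> that by simp
  obtain k where "w = (p ^^ k) v" using \<open>w \<in> orbit\<close> unfolding orbit_def by blast
  then have pw: "p w \<noteq> w" and ppw: "p (p w) \<noteq> w"
    using funpow_not_involution[OF inj not_invol] by simp_all
  obtain u where "u \<in> orbit" and pu: "p u = w" using \<open>w \<in> orbit\<close> p_orbit by (metis imageE)
  have "p w \<in> orbit" using \<open>w \<in> orbit\<close> p_orbit by blast
  have "u \<noteq> w" "p w \<noteq> u" using pw ppw pu by auto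
  have S: "w \<in> S" "u \<in> S" "p w \<in> S" using orbit_S \<open>w \<in> orbit\<close> \<open>u \<in> orbit\<close> \<open>p w \<in> orbit\<close> by auto
  have E: "{w, p w} \<in> E" "{w, u} \<in> E"
    using along_edges[OF S(1) pw] along_edges[OF S(2)] pu \<open>u \<noteq> w\<close> by (auto simp: insert_commute)
  have "r (p w) \<noteq> r w" "r u \<noteq> r w"
    using ranking S E pw \<open>u \<noteq> w\<close> unfolding forest_ranking_def by (metis insert_commute)+
  then have "r (p w) < r w" "r u < r w"
    using w_max \<open>p w \<in> orbit\<close> \<open>u \<in> orbit\<close> by (simp_all add: order.strict_iff_order)
  then have "p w = u" using ranking S E unfolding forest_ranking_def by blast
  with \<open>p w \<noteq> u\<close> show False by simp
qed

lemma forest_edge_perms: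
  assumes "finite S" "forest_ranking S E r"
  shows "{p. p permutes S \<and> (\<forall>i\<in>S. p i \<noteq> i \<longrightarrow> {i, p i} \<in> E)} = matching_perm ` matchings S E"
proof (intro equalityI subsetI)
  fix p assume "p \<in> {p. p permutes S \<and> (\<forall>i\<in>S. p i \<noteq> i \<longrightarrow> {i, p i} \<in> E)}"
  then have p: "p permutes S" "\<And>i. i \<in> S \<Longrightarrow> p i \<noteq> i \<Longrightarrow> {i, p i} \<in> E" by auto
  have "\<And>x. p (p x) = x" by (rule forest_ranking_edge_perm_involution[OF assms(1) p(1) assms(2) p(2)])
  from involution_eq_matching_perm[OF p(1) this p(2)] show "p \<in> matching_perm ` matchings S E"
    by (metis image_eqI)
next
  fix p assume "p \<in> matching_perm ` matchings S E"
  then obtain M where M: "M \<in> matchings S E" and p: "p = matching_perm M" by blast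
  have "is_matching M" "\<Union>M \<subseteq> S" "M \<subseteq> E" using M by (auto simp: matchings_def)
  moreover have "{i, p i} \<in> E" if "p i \<noteq> i" for i
  proof -
    have "i \<in> \<Union>M" using that matching_perm_outside unfolding p by metis
    then obtain e where "e \<in> M" "i \<in> e" by blast
    then show ?thesis using matching_perm_inside(2)[OF \<open>is_matching M\<close>] \<open>M \<subseteq> E\<close> unfolding p by auto
  qed
  ultimately show "p \<in> {p. p permutes S \<and> (\<forall>i\<in>S. p i \<noteq> i \<longrightarrow> {i, p i} \<in> E)}"
    unfolding p using matching_perm_permutes by blast
qed

definition char_matrix :: "nat \<Rightarrow> nat set set \<Rightarrow> int poly mat" where
  "char_matrix n E = mat n n (\<lambda>(i, j). if i = j then X else if {i, j} \<in> E then -1 else 0)"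

lemma prod_char_matrix_matching_perm:
  assumes M: "M \<in> matchings {0..<n} E"
  shows "(\<Prod>i = 0..<n. char_matrix n E $$ (i, matching_perm M i)) = X ^ (n - 2 * card M)"
proof -
  let ?S = "{0..<n::nat}"
  have M': "is_matching M" "\<Union>M \<subseteq> ?S" "M \<subseteq> E" using M by (auto simp: matchings_def)
  have entry: "char_matrix n E $$ (i, matching_perm M i) = (if i \<in> \<Union>M then -1 else X)" if "i \<in> ?S" for i
  proof (cases "i \<in> \<Union>M")
    case True
    then obtain e where e: "e \<in> M" "i \<in> e" by blast
    note inside = matching_perm_inside[OF M'(1) e]
    then have "matching_perm M i \<in> ?S" using e M'(2) by blast
    then show ?thesis using that inside e M'(3) True by (auto simp: char_matrix_def)
  next
    case False
    then show ?thesis using that by (simp add: char_matrix_def matching_perm_outside)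
  qed
  have "card (\<Union>M) = 2 * card M" using matchings_cardD[OF _ M] by simp
  then have "card (?S - \<Union>M) = n - 2 * card M" using card_Diff_subset[OF _ M'(2)] M'(2)
    by (simp add: finite_subset)
  have "(\<Prod>i\<in>?S. char_matrix n E $$ (i, matching_perm M i)) = (\<Prod>i\<in>?S. if i \<in> \<Union>M then -1 else X)"
    using entry by (rule prod.cong[OF refl])
  also have "\<dots> = (\<Prod>i \<in> ?S \<inter> {i. i \<in> \<Union>M}. -1) * (\<Prod>i \<in> ?S \<inter> - {i. i \<in> \<Union>M}. X)"
    by (rule prod.If_cases) simp
  also have "?S \<inter> {i. i \<in> \<Union>M} = \<Union>M" using M'(2) by auto
  also have "?S \<inter> - {i. i \<in> \<Union>M} = ?S - \<Union>M" by auto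
  also have "(\<Prod>i \<in> \<Union>M. -1) * (\<Prod>i \<in> ?S - \<Union>M. X) = (-1) ^ card (\<Union>M) * X ^ card (?S - \<Union>M)"
    by simp
  also have "\<dots> = X ^ (n - 2 * card M)"
    using \<open>card (\<Union>M) = 2 * card M\<close> \<open>card (?S - \<Union>M) = n - 2 * card M\<close> by (simp add: power_mult)
  finally show ?thesis .
qed

lemma det_char_matrix_forest:
  assumes "forest_ranking {0..<n} E r"
  shows "det (char_matrix n E) = matching_polynomial {0..<n} E"
proof -
  let ?S = "{0..<n::nat}"
  define summand where "summand p = of_int (sign p) * (\<Prod>i = 0..<n. char_matrix n E $$ (i, p i))" for p
  let ?edge_perms = "{p. p permutes ?S \<and> (\<forall>i\<in>?S. p i \<noteq> i \<longrightarrow> {i, p i} \<in> E)}"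
  have "det (char_matrix n E) = sum summand {p. p permutes ?S}"
    unfolding det_def summand_def by (simp add: char_matrix_def)
  also have "\<dots> = sum summand ?edge_perms"
  proof (rule sum.mono_neutral_right)
    show "finite {p. p permutes ?S}" by (simp add: finite_permutations)
    show "?edge_perms \<subseteq> {p. p permutes ?S}" by blast
    show "\<forall>p\<in>{p. p permutes ?S} - ?edge_perms. summand p = 0"
    proof
      fix p assume p: "p \<in> {p. p permutes ?S} - ?edge_perms"
      then obtain i where i: "i \<in> ?S" "p i \<noteq> i" "{i, p i} \<notin> E" by auto
      have "p i \<in> ?S" using p i(1) by (simp add: permutes_in_image)
      then have "char_matrix n E $$ (i, p i) = 0" using i by (simp add: char_matrix_def)
      then have "(\<Prod>i = 0..<n. char_matrix n E $$ (i, p i)) = 0" using i(1) by (intro prod_zero) auto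
      then show "summand p = 0" unfolding summand_def by simp
    qed
  qed
  also have "\<dots> = sum (summand \<circ> matching_perm) (matchings ?S E)"
    unfolding forest_edge_perms[OF finite_atLeastLessThan assms]
      by (simp add: sum.reindex[OF inj_on_matching_perm])
  also have "\<dots> = matching_polynomial ?S E"
    unfolding matching_polynomial_def
  proof (intro sum.cong refl)
    fix M assume M: "M \<in> matchings ?S E"
    have "finite M" "is_matching M" using matchings_cardD(1)[OF _ M] M by (auto simp: matchings_def)
    then have "sign (matching_perm M) = (-1) ^ card M" using sign_matching_perm by blast
    then show "(summand \<circ> matching_perm) M = (-1) ^ card M * X ^ (card ?S - 2 * card M)"
      unfolding summand_def by (simp add: prod_char_matrix_matching_perm[OF M])
  qed
  finally show ?thesis .
qed

definition simple_graph :: "'a graph \<Rightarrow> bool" where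
  "simple_graph G \<longleftrightarrow> finite (verts G) \<and> (\<forall>e\<in>edges G. card e = 2 \<and> e \<subseteq> verts G)"

lemma forest_ranking_inj_on:
  assumes "inj_on f S" "forest_ranking (f ` S) E r"
  shows "forest_ranking S {e. f ` e \<in> E} (r \<circ> f)"
proof -
  have "f u \<noteq> f v" if "u \<in> S" "v \<in> S" "u \<noteq> v" for u v
    using assms(1) that by (meson inj_onD)
  with assms(2) show ?thesis
    unfolding forest_ranking_def by (simp add: inj_on_eq_iff[OF assms(1)])
qed

lemma char_poly_graph_forest:
  assumes simple: "simple_graph G" and ranking: "forest_ranking (verts G) (edges G) r"
  shows "char_poly_graph G = matching_polynomial (verts G) (edges G)"
proof -
  define vs where "vs = vertex_list G"
  have "finite (verts G)" using simple by (simp add: simple_graph_def)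
  then have "\<exists>vs. distinct vs \<and> set vs = verts G" by (metis finite_distinct_list)
  then have "distinct vs \<and> set vs = verts G" unfolding vs_def vertex_list_def by (rule someI_ex)
  then have vs: "distinct vs" "set vs = verts G" by auto
  define n where "n = length vs"
  define E where "E = {e. (!) vs ` e \<in> edges G}"
  have inj: "inj_on ((!) vs) {0..<n}" using inj_on_nth[OF vs(1)] unfolding n_def by simp
  have verts: "(!) vs ` {0..<n} = verts G" using vs(2) unfolding n_def by (simp add: nth_image)
  have no_loop: "{vs ! i} \<notin> edges G" for i using simple unfolding simple_graph_def by fastforce
  have "char_poly_matrix (adj_matrix G) = char_matrix n E"
    unfolding char_poly_matrix_def adj_matrix_def char_matrix_def
      Let_def vs_def[symmetric] n_def[symmetric]
    by (rule eq_matI) (auto simp: E_def no_loop one_pCons)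
  then have "char_poly_graph G = det (char_matrix n E)"
    unfolding char_poly_graph_def char_poly_def by simp
  also have "\<dots> = matching_polynomial {0..<n} E"
    using det_char_matrix_forest forest_ranking_inj_on[OF inj] ranking
    unfolding verts[symmetric] E_def by blast
  also have "\<dots> = matching_polynomial (verts G) (edges G)"
    unfolding verts[symmetric] by (rule matching_polynomial_image[OF inj, symmetric]) (auto simp: E_def)
  finally show ?thesis .
qed

lemma matching_poly_eq_matching_polynomial:
  assumes "simple_graph G"
  shows "matching_poly G = matching_polynomial (verts G) (edges G)"
proof -
  let ?V = "verts G" and ?E = "edges G"
  have "finite ?V" using assms by (simp add: simple_graph_def)
  have edges: "\<forall>e\<in>?E. card e = 2 \<and> e \<subseteq> ?V" using assms by (simp add: simple_graph_def)
  have matching_iff: "M \<subseteq> ?E \<and> (\<forall>e\<in>M. \<forall>f\<in>M. e \<noteq> f \<longrightarrow> e \<inter> f = {}) \<longleftrightarrow> M \<in> matchings ?V ?E" for M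
  proof
    assume M: "M \<subseteq> ?E \<and> (\<forall>e\<in>M. \<forall>f\<in>M. e \<noteq> f \<longrightarrow> e \<inter> f = {})"
    then have "\<Union>M \<subseteq> ?V" "\<forall>e\<in>M. card e = 2" using edges by auto
    with M show "M \<in> matchings ?V ?E" by (simp add: matchings_def is_matching_def)
  qed (simp add: matchings_def is_matching_def)
  have num: "num_matchings G k = card {M \<in> matchings ?V ?E. card M = k}" for k
    unfolding num_matchings_def matching_iff[symmetric] by (simp add: conj_ac)
  have "matching_polynomial ?V ?E =
      (\<Sum>k \<le> card ?V div 2. \<Sum>M \<in> {M \<in> matchings ?V ?E. card M = k}.
          (-1) ^ card M * X ^ (card ?V - 2 * card M))"
    unfolding matching_polynomial_def
  proof (rule sum.group[symmetric])
    show "card ` matchings ?V ?E \<subseteq> {..card ?V div 2}"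
      using matchings_cardD(3)[OF \<open>finite ?V\<close>] by fastforce
  qed (simp_all add: \<open>finite ?V\<close> finite_matchings)
  also have "\<dots> = matching_poly G"
    unfolding matching_poly_def
  proof (intro sum.cong refl)
    fix k
    have "(\<Sum>M \<in> {M \<in> matchings ?V ?E. card M = k}. (-1) ^ card M * X ^ (card ?V - 2 * card M)) =
        of_nat (num_matchings G k) * ((-1) ^ k * X ^ (card ?V - 2 * k))"
      unfolding num by simp
    also have "\<dots> = monom ((-1) ^ k * int (num_matchings G k)) (card ?V - 2 * k)"
      by (cases "even k") (simp_all add: monom_altdef of_nat_poly)
    finally show "(\<Sum>M \<in> {M \<in> matchings ?V ?E. card M = k}. (-1) ^ card M * X ^ (card ?V - 2 * card M)) =
        monom ((-1) ^ k * int (num_matchings G k)) (card ?V - 2 * k)" .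
  qed
  finally show ?thesis ..
qed

lemma forests_same_char_poly_and_matching_energy:
  assumes "simple_graph G" "forest_ranking (verts G) (edges G) rG"
    and "simple_graph H" "forest_ranking (verts H) (edges H) rH"
    and "matching_polynomial (verts G) (edges G) = matching_polynomial (verts H) (edges H)"
  shows "char_poly_graph G = char_poly_graph H \<and> matching_energy G = matching_energy H"
proof -
  have "matching_poly G = matching_poly H"
    using assms(1,3,5) by (simp add: matching_poly_eq_matching_polynomial)
  then show ?thesis
    using assms by (simp add: char_poly_graph_forest matching_energy_def)
qed

section \<open>Disjoint unions\<close>

lemma verts_disj_union: "verts (disj_union G H) = Inl ` verts G \<union> Inr ` verts H"
  by (simp add: disj_union_def verts_def)

lemma edges_disj_union: "edges (disj_union G H) = (`) Inl ` edges G \<union> (`) Inr ` edges H"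
  by (simp add: disj_union_def edges_def)

lemma Inl_image_in_edges_disj_union:
  "e \<noteq> {} \<Longrightarrow> Inl ` e \<in> edges (disj_union G H) \<longleftrightarrow> e \<in> edges G"
  by (auto simp: edges_disj_union inj_image_eq_iff)

lemma Inr_image_in_edges_disj_union:
  "e \<noteq> {} \<Longrightarrow> Inr ` e \<in> edges (disj_union G H) \<longleftrightarrow> e \<in> edges H"
  by (auto simp: edges_disj_union inj_image_eq_iff)

lemma doubleton_in_edges_disj_union:
  "{Inl a, Inl a'} \<in> edges (disj_union G H) \<longleftrightarrow> {a, a'} \<in> edges G"
  "{Inr b, Inr b'} \<in> edges (disj_union G H) \<longleftrightarrow> {b, b'} \<in> edges H"
  "{Inl a, Inr b} \<notin> edges (disj_union G H)"
  "{Inr b, Inl a} \<notin> edges (disj_union G H)"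
  using Inl_image_in_edges_disj_union[of "{a, a'}" G H] Inr_image_in_edges_disj_union[of "{b, b'}" G H]
  by (auto simp: edges_disj_union image_iff dest: equalityD1)

lemma simple_graph_disj_union:
  "simple_graph G \<Longrightarrow> simple_graph H \<Longrightarrow> simple_graph (disj_union G H)"
  unfolding simple_graph_def verts_disj_union edges_disj_union by (auto simp: card_image) blast+

lemma forest_ranking_disj_union:
  assumes "forest_ranking (verts G) (edges G) rG" "forest_ranking (verts H) (edges H) rH"
  shows "forest_ranking (verts (disj_union G H)) (edges (disj_union G H)) (case_sum rG rH)"
  using assms unfolding forest_ranking_def verts_disj_union
  by (simp add: ball_Un doubleton_in_edges_disj_union)

lemma matching_polynomial_disj_union:
  assumes "simple_graph G" "simple_graph H"
  shows "matching_polynomial (verts (disj_union G H)) (edges (disj_union G H)) =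
    matching_polynomial (verts G) (edges G) * matching_polynomial (verts H) (edges H)"
proof -
  let ?E = "edges (disj_union G H)"
  have fin: "finite (verts G)" "finite (verts H)" using assms by (simp_all add: simple_graph_def)
  have "matching_polynomial (verts (disj_union G H)) ?E =
      matching_polynomial (Inl ` verts G) ?E * matching_polynomial (Inr ` verts H) ?E"
    unfolding verts_disj_union
  proof (rule matching_polynomial_Un)
    fix e assume "e \<in> ?E"
    then show "e \<subseteq> Inl ` verts G \<or> e \<subseteq> Inr ` verts H"
      using assms unfolding edges_disj_union simple_graph_def by blast
  qed (use fin in auto)
  also have "matching_polynomial (Inl ` verts G) ?E = matching_polynomial (verts G) (edges G)"
    by (rule matching_polynomial_image) (auto simp: fin card_2_iff doubleton_in_edges_disj_union)
  also have "matching_polynomial (Inr ` verts H) ?E = matching_polynomial (verts H) (edges H)"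
    by (rule matching_polynomial_image) (auto simp: fin card_2_iff doubleton_in_edges_disj_union)
  finally show ?thesis .
qed

section \<open>The paths \<open>P\<^sub>t\<close> and the trees \<open>W\<^sub>N\<close>\<close>

lemma simple_graph_path_graph: "simple_graph (path_graph t)"
  unfolding simple_graph_def path_graph_def verts_def edges_def by auto

lemma forest_ranking_path_graph: "forest_ranking (verts (path_graph t)) (edges (path_graph t)) id"
proof -
  have "a = v - 1" if edge: "{v, a} \<in> edges (path_graph t)" and "a < v" for v a
  proof -
    obtain i where "{v, a} = {i, i + 1}" using edge unfolding path_graph_def edges_def by auto
    with \<open>a < v\<close> show ?thesis by (auto simp: doubleton_eq_iff)
  qed
  then show ?thesis unfolding forest_ranking_def by auto
qed

lemma matching_polynomial_path_graph:
  "matching_polynomial (verts (path_graph t)) (edges (path_graph t)) = path_poly (t + 1)"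
proof -
  have "verts (path_graph t) = {1..<1 + (t + 1)}" by (auto simp: verts_def path_graph_def)
  moreover have "matching_polynomial {1..<1 + (t + 1)} (edges (path_graph t)) = path_poly (t + 1)"
    by (rule matching_polynomial_interval) (auto simp: edges_def path_graph_def)
  ultimately show ?thesis by simp
qed

lemma verts_W_graph: "verts (W_graph (k + 5)) = {1..k + 6}"
  by (simp add: verts_def W_graph_def)

lemma edges_W_graph:
  "edges (W_graph (k + 5)) = {{i, i + 1} | i. 1 \<le> i \<and> i \<le> k + 3} \<union> {{2, k + 5}, {k + 3, k + 6}}"
  by (simp add: edges_def W_graph_def add.commute)

lemma simple_graph_W_graph: "simple_graph (W_graph (k + 5))"
  unfolding simple_graph_def verts_W_graph edges_W_graph by auto

text \<open>One plus the distance from \<open>v\<^sub>1\<close>.\<close>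
definition W_rank :: "nat \<Rightarrow> nat \<Rightarrow> nat" where
  "W_rank k x = (if x = k + 5 then 3 else if x = k + 6 then k + 4 else x)"

lemma forest_ranking_W_graph:
  "forest_ranking (verts (W_graph (k + 5))) (edges (W_graph (k + 5))) (W_rank k)"
proof -
  have adjacent: "(\<exists>i. 1 \<le> i \<and> i \<le> k + 3 \<and> (u = i \<and> v = i + 1 \<or> u = i + 1 \<and> v = i))
      \<or> (u = 2 \<and> v = k + 5) \<or> (u = k + 5 \<and> v = 2) \<or> (u = k + 3 \<and> v = k + 6) \<or> (u = k + 6 \<and> v = k + 3)"
    if edge: "{u, v} \<in> edges (W_graph (k + 5))" for u v
  proof -
    consider i where "{u, v} = {i, i + 1}" "1 \<le> i" "i \<le> k + 3"
        | "{u, v} = {2, k + 5}" | "{u, v} = {k + 3, k + 6}"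
      using edge unfolding edges_W_graph by blast
    then show ?thesis by cases (auto simp: doubleton_eq_iff)
  qed
  have "W_rank k u \<noteq> W_rank k v" if "{u, v} \<in> edges (W_graph (k + 5))" for u v
    using adjacent[OF that] unfolding W_rank_def by auto
  moreover have "a = (if v = k + 5 then 2 else if v = k + 6 then k + 3 else v - 1)"
    if "{v, a} \<in> edges (W_graph (k + 5))" "W_rank k a < W_rank k v" for v a
    using adjacent[OF that(1)] that(2) unfolding W_rank_def by auto
  ultimately show ?thesis unfolding forest_ranking_def by metis
qed

lemma matching_polynomial_interval_W_graph:
  assumes "1 \<le> a" "a + j \<le> k + 5"
  shows "matching_polynomial {a..<a + j} (edges (W_graph (k + 5))) = path_poly j"
  by (rule matching_polynomial_interval) (use assms in \<open>auto simp: edges_W_graph\<close>)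

lemma matching_polynomial_W_graph_minus_vertex:
  "matching_polynomial {1..k + 5} (edges (W_graph (k + 5)))
    = X * path_poly (k + 4) - X * path_poly (k + 2)"
proof -
  let ?E = "edges (W_graph (k + 5))"
  have "matching_polynomial {1..k + 5} ?E =
      X * matching_polynomial ({1..k + 5} - {k + 5}) ?E - matching_polynomial ({1..k + 5} - {2, k + 5}) ?E"
    by (rule matching_polynomial_pendant) (auto simp: edges_W_graph)
  also have "{1..k + 5} - {k + 5} = {1..<1 + (k + 4)}" by auto
  also have "matching_polynomial ({1..k + 5} - {2, k + 5}) ?E =
      X * matching_polynomial ({1..k + 5} - {2, k + 5} - {1}) ?E"
    by (rule matching_polynomial_isolated) (auto simp: edges_W_graph)
  also have "{1..k + 5} - {2, k + 5} - {1} = {3..<3 + (k + 2)}" by auto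
  finally show ?thesis
    by (simp only: matching_polynomial_interval_W_graph add_le_mono order_refl one_le_numeral)
qed

lemma matching_polynomial_W_graph_minus_edge:
  "matching_polynomial ({1..k + 6} - {k + 3, k + 6}) (edges (W_graph (k + 5))) =
    X * (X * path_poly (k + 2) - X * path_poly k)"
proof -
  let ?E = "edges (W_graph (k + 5))" and ?V = "{1..k + 6} - {k + 3, k + 6} - {k + 4}"
  have "matching_polynomial ({1..k + 6} - {k + 3, k + 6}) ?E = X * matching_polynomial ?V ?E"
    by (rule matching_polynomial_isolated) (auto simp: edges_W_graph)
  also have "matching_polynomial ?V ?E =
      X * matching_polynomial (?V - {k + 5}) ?E - matching_polynomial (?V - {2, k + 5}) ?E"
    by (rule matching_polynomial_pendant) (auto simp: edges_W_graph)
  also have "?V - {k + 5} = {1..<1 + (k + 2)}" by auto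
  also have "matching_polynomial (?V - {2, k + 5}) ?E = X * matching_polynomial (?V - {2, k + 5} - {1}) ?E"
    by (rule matching_polynomial_isolated) (auto simp: edges_W_graph)
  also have "?V - {2, k + 5} - {1} = {3..<3 + k}" by auto
  finally show ?thesis
    by (simp only: matching_polynomial_interval_W_graph add_le_mono order_refl one_le_numeral)
qed

lemma matching_polynomial_W_graph:
  "matching_polynomial (verts (W_graph (k + 5))) (edges (W_graph (k + 5))) =
    X\<^sup>2 * (X\<^sup>2 - 4) * path_poly (k + 2)"
proof -
  let ?E = "edges (W_graph (k + 5))"
  have "matching_polynomial {1..k + 6} ?E =
      X * matching_polynomial ({1..k + 6} - {k + 6}) ?E
          - matching_polynomial ({1..k + 6} - {k + 3, k + 6}) ?E"
    by (rule matching_polynomial_pendant) (auto simp: edges_W_graph)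
  also have "{1..k + 6} - {k + 6} = {1..k + 5}" by auto
  also have "X * matching_polynomial {1..k + 5} ?E - matching_polynomial ({1..k + 6} - {k + 3, k + 6}) ?E =
      X * (X * path_poly (k + 4) - X * path_poly (k + 2)) - X * (X * path_poly (k + 2) - X * path_poly k)"
    unfolding matching_polynomial_W_graph_minus_vertex matching_polynomial_W_graph_minus_edge ..
  also have "\<dots> = X\<^sup>2 * (path_poly (k + 4) - 2 * path_poly (k + 2) + path_poly k)"
    by (simp add: algebra_simps power2_eq_square)
  finally have "matching_polynomial {1..k + 6} ?E
      = X\<^sup>2 * (path_poly (k + 4) - 2 * path_poly (k + 2) + path_poly k)" .
  then show ?thesis unfolding verts_W_graph path_poly_shift_identity by (simp add: mult.assoc)
qed

theorem theorem9:
  fixes m n :: nat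
  assumes "m \<ge> 6" and "n \<ge> 6"
  shows "char_poly_graph (disj_union (path_graph (m - 5)) (W_graph (n - 1))) =
           char_poly_graph (disj_union (path_graph (n - 5)) (W_graph (m - 1)))
       \<and> matching_energy (disj_union (path_graph (m - 5)) (W_graph (n - 1))) =
           matching_energy (disj_union (path_graph (n - 5)) (W_graph (m - 1)))"
proof -
  define a b where "a = m - 6" and "b = n - 6"
  have m: "m - 5 = a + 1" "m - 1 = a + 5" and n: "n - 5 = b + 1" "n - 1 = b + 5"
    using assms unfolding a_def b_def by simp_all
  let ?G = "\<lambda>s k. disj_union (path_graph s) (W_graph (k + 5))"
  have simple: "simple_graph (?G s k)" for s k
    by (simp add: simple_graph_disj_union simple_graph_path_graph simple_graph_W_graph)
  have ranking: "forest_ranking (verts (?G s k)) (edges (?G s k)) (case_sum id (W_rank k))" for s k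
    by (simp add: forest_ranking_disj_union forest_ranking_path_graph forest_ranking_W_graph)
  have "matching_polynomial (verts (?G s k)) (edges (?G s k)) =
      path_poly (s + 1) * (X\<^sup>2 * (X\<^sup>2 - 4) * path_poly (k + 2))" for s k
    by (simp add: matching_polynomial_disj_union simple_graph_path_graph simple_graph_W_graph
        matching_polynomial_path_graph matching_polynomial_W_graph)
  then have "matching_polynomial (verts (?G (a + 1) b)) (edges (?G (a + 1) b)) =
      matching_polynomial (verts (?G (b + 1) a)) (edges (?G (b + 1) a))"
    by (simp add: ac_simps)
  then show ?thesis
    unfolding m n by (rule forests_same_char_poly_and_matching_energy[OF simple ranking simple ranking])
qed

end
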